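(* Assume the setting of the context and let $\varepsilon>0$. Define \[ \Gamma_\pm=1-2^{1\mp\varepsilon/2}\Big(\tfrac23\Big)^{d/2}+2^{-d/2\mp\varepsilon},\qquad \Delta_\pm=\Big(\tfrac23\Big)^{d/2}+3\cdot2^{d/2\mp\varepsilon/2}5^{-d/2}+3\cdot2^{\mp\varepsilon-d}+2^{\mp3\varepsilon/2-d/2}3^{-d/2}. \] Assume $\Gamma_+>0$ and let $c\in(0,1)$ be such that \[ \eta:=c\,\frac{2^{\varepsilon/2}-1}{1+2^{\varepsilon/2}}<\frac{\Gamma_+}{1+2^{1-\varepsilon/2}(2/3)^{d/2}+2^{-d/2-\varepsilon}}, \] and set $\eta^*_\pm=\eta\,\frac{1+2^{1\mp\varepsilon/2}(2/3)^{d/2}+2^{-d/2\mp\varepsilon}}{\Gamma_\pm}$. Suppose $t>0$ is such that for every $\hat t\in\{t/3,\,2t/5,\,t/2,\,2t/3,\,t,\,2t\}$, $(1-\eta)p(x)\pi^{d/2}\hat t^{d/2}\le\mathbb{E}[K_{\hat t}(x,X)]\le(1+\eta)p(x)\pi^{d/2}\hat t^{d/2}$. Then \[ \mathbb{E}[Y_+]\le(2^{\varepsilon/2}-1)(1+c)P_t,\qquad \mathbb{E}[-Y_-]\le(1-2^{-\varepsilon/2})(1+c)P_t, \] \[ \mathrm{Var}(Y_\pm)\ge2^{\pm\varepsilon}\Gamma_\pm(1-\eta^*_\pm)P_t+\mathcal O(P_t^2),\qquad \mathbb{E}\big[|Y_\pm-\mathbb{E}[Y_\pm]|^3\big]\le(1+\eta)\Delta_\pm2^{d/2\pm3\varepsilon/2}P_t+\mathcal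 O(P_t^2), \] where $\mathcal O(P_t^2)$ denotes a quantity bounded in absolute value by a constant depending only on $d,\varepsilon,c$ times $P_t^2$.
   Context: Setting: $\Omega\subset\mathbb{R}^N$ is a smooth $d$-dimensional submanifold ($d\ge1$ an integer). $X$ is a random point of $\Omega$ with probability density $p$ with respect to the volume measure of $\Omega$. A point $x\in\Omega$ with $p(x)>0$ is fixed. $K_t(x,y)=\exp(-\|x-y\|^2/t)$ for $t>0$. $P_t=2^{d/2}p(x)\pi^{d/2}t^{d/2}$. Random variables $Y_+=2^{(d+\varepsilon)/2}K_t(x,X)-K_{2t}(x,X)$ and $Y_-=2^{(d-\varepsilon)/2}K_t(x,X)-K_{2t}(x,X)$. *)

theory Defs
  imports "HOL-Analysis.Analysis" "HOL-Probability.Probability"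
begin

text \<open>Points of the ambient space R^N are represented as functions nat => real;
  only the coordinates 0..N-1 enter the squared Euclidean distance.\<close>

definition sqdist :: "nat \<Rightarrow> (nat \<Rightarrow> real) \<Rightarrow> (nat \<Rightarrow> real) \<Rightarrow> real" where
  "sqdist N x y = (\<Sum>i<N. (x i - y i)^2)"

definition kern :: "nat \<Rightarrow> real \<Rightarrow> (nat \<Rightarrow> real) \<Rightarrow> (nat \<Rightarrow> real) \<Rightarrow> real" where
  "kern N t x y = exp (- sqdist N x y / t)"

definition Pt :: "nat \<Rightarrow> real \<Rightarrow> real \<Rightarrow> real" where
  "Pt d px t = 2 powr (real d / 2) * px * pi powr (real d / 2) * t powr (real d / 2)"

text \<open>With e = +eps (resp. -eps): Gam d e = Gamma_+ (resp. Gamma_-), Del d e = Delta_+ (resp. Delta_-),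
  Nm d e = 1 + 2^(1 - e/2)(2/3)^(d/2) + 2^(-d/2 - e).\<close>
definition Gam :: "nat \<Rightarrow> real \<Rightarrow> real" where
  "Gam d e = 1 - 2 powr (1 - e/2) * (2/3) powr (real d / 2) + 2 powr (- real d / 2 - e)"

definition Del :: "nat \<Rightarrow> real \<Rightarrow> real" where
  "Del d e = (2/3) powr (real d / 2) + 3 * 2 powr (real d / 2 - e/2) * 5 powr (- real d / 2)
     + 3 * 2 powr (- e - real d) + 2 powr (- 3 * e / 2 - real d / 2) * 3 powr (- real d / 2)"

definition Nm :: "nat \<Rightarrow> real \<Rightarrow> real" where
  "Nm d e = 1 + 2 powr (1 - e/2) * (2/3) powr (real d / 2) + 2 powr (- real d / 2 - e)"

definition Yv :: "nat \<Rightarrow> nat \<Rightarrow> real \<Rightarrow> real \<Rightarrow> (nat \<Rightarrow> real) \<Rightarrow> (nat \<Rightarrow> real) \<Rightarrow> real" where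
  "Yv N d e t x y = 2 powr ((real d + e) / 2) * kern N t x y - kern N (2*t) x y"

end

(*
  Y = 2^((d+e)/2) K_t - K_2t is a combination of two Gaussians centred at x, and such
  Gaussians multiply like K_(2t/a) K_(2t/b) = K_(2t/(a+b)). Hence E[Y], E[Y^2] and the
  third moment of the envelope W = 2^((d+e)/2) K_t + K_2t >= |Y| are linear combinations
  of E[K_(2t/n)] for n = 1..6, which are exactly the six scales of the hypothesis; each
  equals P_t n^(-d/2) up to a factor 1 +- eta, and collecting terms produces Gamma and Delta.
  The remaining contributions to the variance and to E|Y - E Y|^3 <= E (W + |E Y|)^3 carry
  at least two factors of order P_t, and E[K_t] <= 1 bounds P_t by 2^(d/2)/(1 - eta),
  so they are O(P_t^2).
*)
theory Submission
  imports Defs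
begin

lemma kern_pos: "0 < kern N t x y"
  unfolding kern_def by simp

lemma kern_le_1: "0 < t \<Longrightarrow> kern N t x y \<le> 1"
  unfolding kern_def sqdist_def by (simp add: sum_nonneg)

lemma kern_mult_scale: "kern N (c / a) x y * kern N (c / b) x y = kern N (c / (a + b)) x y"
  unfolding kern_def exp_add[symmetric] by (simp add: distrib_left diff_divide_distrib)

lemma borel_measurable_kern: "(\<lambda>y. kern N t x y) \<in> borel_measurable borel"
  unfolding kern_def sqdist_def by measurable

lemma (in prob_space) expectation_abs_sub_cube_le:
  fixes Z W :: "'a \<Rightarrow> real"
  assumes Z: "Z \<in> borel_measurable M"
    and W: "integrable M W" "integrable M (\<lambda>y. W y ^ 2)" "integrable M (\<lambda>y. W y ^ 3)"
    and dom: "\<And>y. \<bar>Z y\<bar> \<le> W y"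
  shows "expectation (\<lambda>y. \<bar>Z y - m\<bar> ^ 3)
    \<le> expectation (\<lambda>y. W y ^ 3) + 3 * \<bar>m\<bar> * expectation (\<lambda>y. W y ^ 2)
       + 3 * m\<^sup>2 * expectation W + \<bar>m\<bar> ^ 3"
proof -
  define V where "V y = W y ^ 3 + 3 * \<bar>m\<bar> * W y ^ 2 + 3 * m\<^sup>2 * W y + \<bar>m\<bar> ^ 3" for y
  have V_int: "integrable M V"
    unfolding V_def using W by simp
  have pointwise: "\<bar>Z y - m\<bar> ^ 3 \<le> V y" for y
  proof -
    have "\<bar>Z y - m\<bar> \<le> W y + \<bar>m\<bar>"
      using dom[of y] by linarith
    then have "\<bar>Z y - m\<bar> ^ 3 \<le> (W y + \<bar>m\<bar>) ^ 3"
      by (rule power_mono) simp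
    also have "\<dots> = V y"
      unfolding V_def by (simp add: power2_eq_square power3_eq_cube algebra_simps)
    finally show ?thesis .
  qed
  have "integrable M (\<lambda>y. \<bar>Z y - m\<bar> ^ 3)"
    by (rule Bochner_Integration.integrable_bound[OF V_int])
       (use Z pointwise order_trans[OF _ abs_ge_self] in auto)
  then have "expectation (\<lambda>y. \<bar>Z y - m\<bar> ^ 3) \<le> expectation V"
    using V_int pointwise by (rule integral_mono)
  also have "\<dots> = expectation (\<lambda>y. W y ^ 3) + 3 * \<bar>m\<bar> * expectation (\<lambda>y. W y ^ 2)
       + 3 * m\<^sup>2 * expectation W + \<bar>m\<bar> ^ 3"
    unfolding V_def using W by (simp add: prob_space)
  finally show ?thesis .
qed

lemma half_power_identities:
  fixes d :: nat and e :: real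
  defines "g \<equiv> 2 powr (e / 2)" and "h \<equiv> 2 powr (real d / 2)"
    and "r3 \<equiv> 3 powr (real d / 2)" and "r5 \<equiv> 5 powr (real d / 2)"
  shows "2 powr ((real d + e) / 2) = h * g" "2 powr e = g\<^sup>2"
    "2 powr (real d / 2 + 3 * e / 2) = h * g ^ 3"
    "4 powr (real d / 2) = h\<^sup>2" "6 powr (real d / 2) = h * r3"
    "Gam d e = 1 - (2 / g) * (h / r3) + 1 / (h * g\<^sup>2)"
    "Nm d e = 1 + (2 / g) * (h / r3) + 1 / (h * g\<^sup>2)"
    "Del d e = h / r3 + 3 * h / (g * r5) + 3 / (g\<^sup>2 * h\<^sup>2) + 1 / (g ^ 3 * h * r3)"
proof -
  have four_six: "(4 :: real) = 2 * 2" "(6 :: real) = 2 * 3"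
    by simp_all
  have expand: "2 powr (1 - e / 2) = 2 / g" "(2 / 3) powr (real d / 2) = h / r3"
    "2 powr (- real d / 2 - e) = 1 / (h * g\<^sup>2)" "2 powr (real d / 2 - e / 2) = h / g"
    "5 powr (- real d / 2) = 1 / r5" "2 powr (- e - real d) = 1 / (g\<^sup>2 * h\<^sup>2)"
    "2 powr (- 3 * e / 2 - real d / 2) = 1 / (g ^ 3 * h)" "3 powr (- real d / 2) = 1 / r3"
    unfolding g_def h_def r3_def r5_def
    by (simp_all add: power2_eq_square power3_eq_cube powr_add[symmetric] powr_minus
        powr_diff powr_divide divide_simps)
  show "2 powr ((real d + e) / 2) = h * g" "2 powr e = g\<^sup>2"
    "2 powr (real d / 2 + 3 * e / 2) = h * g ^ 3"
    unfolding g_def h_def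
    by (simp_all add: power2_eq_square power3_eq_cube powr_add[symmetric] add_divide_distrib)
  show "4 powr (real d / 2) = h\<^sup>2" "6 powr (real d / 2) = h * r3"
    unfolding h_def r3_def four_six powr_mult by (simp_all add: power2_eq_square)
  show "Gam d e = 1 - (2 / g) * (h / r3) + 1 / (h * g\<^sup>2)"
    "Nm d e = 1 + (2 / g) * (h / r3) + 1 / (h * g\<^sup>2)"
    unfolding Gam_def Nm_def expand by simp_all
  show "Del d e = h / r3 + 3 * h / (g * r5) + 3 / (g\<^sup>2 * h\<^sup>2) + 1 / (g ^ 3 * h * r3)"
    unfolding Del_def expand by (simp add: field_simps)
qed

text \<open>In units of P_t, both |E Y| and E W are at most M1 and E W^2 is at most M2, while
  P_t itself is at most 2^(d/2)/(1 - eta).\<close>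

definition moment_error_const :: "nat \<Rightarrow> real \<Rightarrow> real \<Rightarrow> real" where
  "moment_error_const d \<eta> e =
    (let M1 = (1 + \<eta>) * (2 powr (e / 2) + 1); M2 = (1 + \<eta>) * 2 powr e * Nm d e
     in M1\<^sup>2 + 3 * M1 * M2 + 4 * M1 ^ 3 * 2 powr (real d / 2) / (1 - \<eta>))"

lemma Nm_pos: "0 < Nm d e"
  unfolding Nm_def by (simp add: add_pos_pos)

lemma moment_error_const_nonneg: "0 \<le> \<eta> \<Longrightarrow> \<eta> < 1 \<Longrightarrow> 0 \<le> moment_error_const d \<eta> e"
  unfolding moment_error_const_def Let_def using Nm_pos[of d e] by simp

locale gaussian_kernel_moments = prob_space \<mu>
  for \<mu> :: "(nat \<Rightarrow> real) measure" and N d :: nat and x :: "nat \<Rightarrow> real" and px t \<eta> :: real +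
  assumes sets_eq_borel: "sets \<mu> = sets borel"
    and px_pos: "0 < px" and t_pos: "0 < t"
    and eta_nonneg: "0 \<le> \<eta>" and eta_less_1: "\<eta> < 1"
    and expectation_kern_bounds: "\<And>th. th \<in> {t/3, 2*t/5, t/2, 2*t/3, t, 2*t} \<Longrightarrow>
      (1 - \<eta>) * px * pi powr (real d / 2) * th powr (real d / 2) \<le> expectation (\<lambda>y. kern N th x y) \<and>
      expectation (\<lambda>y. kern N th x y) \<le> (1 + \<eta>) * px * pi powr (real d / 2) * th powr (real d / 2)"
begin

abbreviation k :: "real \<Rightarrow> (nat \<Rightarrow> real) \<Rightarrow> real" where
  "k n \<equiv> \<lambda>y. kern N (2 * t / n) x y"

lemma integrable_kern: "0 < th \<Longrightarrow> integrable \<mu> (\<lambda>y. kern N th x y)"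
proof (rule integrable_const_bound[where B = 1])
  show "(\<lambda>y. kern N th x y) \<in> borel_measurable \<mu>"
    using borel_measurable_kern measurable_cong_sets[OF sets_eq_borel refl] by blast
  show "0 < th \<Longrightarrow> AE y in \<mu>. norm (kern N th x y) \<le> 1"
    by (simp add: kern_le_1 less_imp_le[OF kern_pos])
qed

lemma expectation_k_bounds:
  assumes n: "n \<in> {1, 2, 3, 4, 5, 6}"
  shows "(1 - \<eta>) * Pt d px t / n powr (real d / 2) \<le> expectation (k n)"
    and "expectation (k n) \<le> (1 + \<eta>) * Pt d px t / n powr (real d / 2)"
proof -
  have "2 * t / n \<in> {t/3, 2*t/5, t/2, 2*t/3, t, 2*t}"
    using n by auto
  moreover have "px * pi powr (real d / 2) * (2 * t / n) powr (real d / 2)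
      = Pt d px t / n powr (real d / 2)"
    using n t_pos unfolding Pt_def by (auto simp: powr_divide powr_mult)
  ultimately show "(1 - \<eta>) * Pt d px t / n powr (real d / 2) \<le> expectation (k n)"
    and "expectation (k n) \<le> (1 + \<eta>) * Pt d px t / n powr (real d / 2)"
    using expectation_kern_bounds[of "2 * t / n"] by (simp_all add: mult.assoc)
qed

lemma Pt_pos: "0 < Pt d px t"
  unfolding Pt_def using px_pos t_pos by simp

lemma Pt_le: "Pt d px t \<le> 2 powr (real d / 2) / (1 - \<eta>)"
proof -
  have "(1 - \<eta>) * Pt d px t / 2 powr (real d / 2) \<le> expectation (k 2)"
    by (rule expectation_k_bounds(1)) simp
  also have "\<dots> \<le> expectation (\<lambda>_. 1)"
    using t_pos by (intro integral_mono integrable_kern) (auto simp: kern_le_1)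
  also have "\<dots> = 1"
    using prob_space by simp
  finally show ?thesis
    using eta_less_1 by (simp add: field_simps)
qed

abbreviation amp :: "real \<Rightarrow> real" where
  "amp e \<equiv> 2 powr ((real d + e) / 2)"

abbreviation W :: "real \<Rightarrow> (nat \<Rightarrow> real) \<Rightarrow> real" where
  "W e \<equiv> \<lambda>y. amp e * k 2 y + k 1 y"

lemma Yv_eq: "Yv N d e t x y = amp e * k 2 y - k 1 y"
  by (simp add: Yv_def)

lemma k_mult: "k a y * k b y = k (a + b) y"
  by (rule kern_mult_scale)

lemma abs_Yv_le_W: "\<bar>Yv N d e t x y\<bar> \<le> W e y"
  unfolding Yv_eq using kern_pos[of N "2 * t / 2" x y] kern_pos[of N "2 * t / 1" x y]
  by (simp add: abs_le_iff)

lemma Yv_square: "(Yv N d e t x y)\<^sup>2 = (amp e)\<^sup>2 * k 4 y - 2 * amp e * k 3 y + k 2 y"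
proof -
  have "(Yv N d e t x y)\<^sup>2 = (amp e)\<^sup>2 * (k 2 y * k 2 y) - 2 * amp e * (k 2 y * k 1 y) + k 1 y * k 1 y"
    unfolding Yv_eq by (simp add: power2_eq_square algebra_simps)
  then show ?thesis
    unfolding k_mult by simp
qed

lemma W_square: "(W e y)\<^sup>2 = (amp e)\<^sup>2 * k 4 y + 2 * amp e * k 3 y + k 2 y"
proof -
  have "(W e y)\<^sup>2 = (amp e)\<^sup>2 * (k 2 y * k 2 y) + 2 * amp e * (k 2 y * k 1 y) + k 1 y * k 1 y"
    by (simp add: power2_eq_square algebra_simps)
  then show ?thesis
    unfolding k_mult by simp
qed

lemma W_cube:
  "(W e y) ^ 3 = amp e ^ 3 * k 6 y + 3 * (amp e)\<^sup>2 * k 5 y + 3 * amp e * k 4 y + k 3 y"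
proof -
  have "(W e y) ^ 3 = amp e ^ 3 * (k 2 y * k 2 y * k 2 y) + 3 * (amp e)\<^sup>2 * (k 2 y * k 2 y * k 1 y)
      + 3 * amp e * (k 2 y * k 1 y * k 1 y) + k 1 y * k 1 y * k 1 y"
    by (simp add: power2_eq_square power3_eq_cube algebra_simps)
  then show ?thesis
    unfolding k_mult by simp
qed

lemma expectation_Yv_le:
  "expectation (\<lambda>y. Yv N d e t x y) \<le> (2 powr (e / 2) * (1 + \<eta>) - (1 - \<eta>)) * Pt d px t"
proof -
  have "expectation (\<lambda>y. Yv N d e t x y) = amp e * expectation (k 2) - expectation (k 1)"
    unfolding Yv_eq by (simp add: integrable_kern t_pos)
  also have "\<dots> \<le> amp e * ((1 + \<eta>) * Pt d px t / 2 powr (real d / 2))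
      - (1 - \<eta>) * Pt d px t / 1 powr (real d / 2)"
    by (intro diff_mono mult_left_mono expectation_k_bounds) simp_all
  also have "\<dots> = (2 powr (e / 2) * (1 + \<eta>) - (1 - \<eta>)) * Pt d px t"
    unfolding half_power_identities(1) by (simp add: field_simps)
  finally show ?thesis .
qed

lemma expectation_neg_Yv_le:
  "expectation (\<lambda>y. - Yv N d e t x y) \<le> ((1 + \<eta>) - 2 powr (e / 2) * (1 - \<eta>)) * Pt d px t"
proof -
  have "expectation (\<lambda>y. - Yv N d e t x y) = expectation (k 1) - amp e * expectation (k 2)"
    unfolding Yv_eq by (simp add: integrable_kern t_pos)
  also have "\<dots> \<le> (1 + \<eta>) * Pt d px t / 1 powr (real d / 2)
      - amp e * ((1 - \<eta>) * Pt d px t / 2 powr (real d / 2))"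
    by (intro diff_mono mult_left_mono expectation_k_bounds) simp_all
  also have "\<dots> = ((1 + \<eta>) - 2 powr (e / 2) * (1 - \<eta>)) * Pt d px t"
    unfolding half_power_identities(1) by (simp add: field_simps)
  finally show ?thesis .
qed

lemma integrable_Yv: "integrable \<mu> (\<lambda>y. Yv N d e t x y)"
  unfolding Yv_eq by (simp add: integrable_kern t_pos)

lemma integrable_Yv_square: "integrable \<mu> (\<lambda>y. (Yv N d e t x y)\<^sup>2)"
  unfolding Yv_square by (simp add: integrable_kern t_pos)

lemma integrable_W: "integrable \<mu> (W e)"
  by (simp add: integrable_kern t_pos)

lemma integrable_W_square: "integrable \<mu> (\<lambda>y. (W e y)\<^sup>2)"
  unfolding W_square by (simp add: integrable_kern t_pos)

lemma integrable_W_cube: "integrable \<mu> (\<lambda>y. (W e y) ^ 3)"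
  unfolding W_cube by (simp add: integrable_kern t_pos)

lemma expectation_W_le: "expectation (W e) \<le> (1 + \<eta>) * (2 powr (e / 2) + 1) * Pt d px t"
proof -
  have "expectation (W e) = amp e * expectation (k 2) + expectation (k 1)"
    by (simp add: integrable_kern t_pos)
  also have "\<dots> \<le> amp e * ((1 + \<eta>) * Pt d px t / 2 powr (real d / 2))
      + (1 + \<eta>) * Pt d px t / 1 powr (real d / 2)"
    by (intro add_mono mult_left_mono expectation_k_bounds) simp_all
  also have "\<dots> = (1 + \<eta>) * (2 powr (e / 2) + 1) * Pt d px t"
    unfolding half_power_identities(1) by (simp add: field_simps)
  finally show ?thesis .
qed

lemma expectation_W_square_le:
  "expectation (\<lambda>y. (W e y)\<^sup>2) \<le> (1 + \<eta>) * 2 powr e * Nm d e * Pt d px t"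
proof -
  have "expectation (\<lambda>y. (W e y)\<^sup>2)
      = (amp e)\<^sup>2 * expectation (k 4) + 2 * amp e * expectation (k 3) + expectation (k 2)"
    unfolding W_square by (simp add: integrable_kern t_pos)
  also have "\<dots> \<le> (amp e)\<^sup>2 * ((1 + \<eta>) * Pt d px t / 4 powr (real d / 2))
      + 2 * amp e * ((1 + \<eta>) * Pt d px t / 3 powr (real d / 2))
      + (1 + \<eta>) * Pt d px t / 2 powr (real d / 2)"
    by (intro add_mono mult_left_mono expectation_k_bounds) simp_all
  also have "\<dots> = (1 + \<eta>) * 2 powr e * Nm d e * Pt d px t"
    unfolding half_power_identities(1,3-8) half_power_identities(2)[of e] by (simp add: field_simps power2_eq_square)
  finally show ?thesis .
qed

lemma expectation_W_cube_le:
  "expectation (\<lambda>y. (W e y) ^ 3) \<le> (1 + \<eta>) * Del d e * 2 powr (real d / 2 + 3 * e / 2) * Pt d px t"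
proof -
  have "expectation (\<lambda>y. (W e y) ^ 3) = amp e ^ 3 * expectation (k 6)
      + 3 * (amp e)\<^sup>2 * expectation (k 5) + 3 * amp e * expectation (k 4) + expectation (k 3)"
    unfolding W_cube by (simp add: integrable_kern t_pos)
  also have "\<dots> \<le> amp e ^ 3 * ((1 + \<eta>) * Pt d px t / 6 powr (real d / 2))
      + 3 * (amp e)\<^sup>2 * ((1 + \<eta>) * Pt d px t / 5 powr (real d / 2))
      + 3 * amp e * ((1 + \<eta>) * Pt d px t / 4 powr (real d / 2))
      + (1 + \<eta>) * Pt d px t / 3 powr (real d / 2)"
    by (intro add_mono mult_left_mono expectation_k_bounds) simp_all
  also have "\<dots> = (1 + \<eta>) * Del d e * 2 powr (real d / 2 + 3 * e / 2) * Pt d px t"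
    unfolding half_power_identities(1,3-8) half_power_identities(2)[of e] by (simp add: field_simps power2_eq_square power3_eq_cube)
  finally show ?thesis .
qed

lemma expectation_Yv_square_ge:
  "2 powr e * (Gam d e - \<eta> * Nm d e) * Pt d px t \<le> expectation (\<lambda>y. (Yv N d e t x y)\<^sup>2)"
proof -
  have "2 powr e * (Gam d e - \<eta> * Nm d e) * Pt d px t
      = (amp e)\<^sup>2 * ((1 - \<eta>) * Pt d px t / 4 powr (real d / 2))
      - 2 * amp e * ((1 + \<eta>) * Pt d px t / 3 powr (real d / 2))
      + (1 - \<eta>) * Pt d px t / 2 powr (real d / 2)"
    unfolding half_power_identities(1,3-8) half_power_identities(2)[of e] by (simp add: field_simps power2_eq_square)
  also have "\<dots> \<le> (amp e)\<^sup>2 * expectation (k 4) - 2 * amp e * expectation (k 3) + expectation (k 2)"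
    by (intro add_mono diff_mono mult_left_mono expectation_k_bounds) simp_all
  also have "\<dots> = expectation (\<lambda>y. (Yv N d e t x y)\<^sup>2)"
    unfolding Yv_square by (simp add: integrable_kern t_pos)
  finally show ?thesis .
qed

lemma abs_expectation_Yv_le:
  "\<bar>expectation (\<lambda>y. Yv N d e t x y)\<bar> \<le> (1 + \<eta>) * (2 powr (e / 2) + 1) * Pt d px t"
proof -
  have "\<bar>expectation (\<lambda>y. Yv N d e t x y)\<bar> \<le> expectation (\<lambda>y. \<bar>Yv N d e t x y\<bar>)"
    by (rule integral_abs_bound)
  also have "\<dots> \<le> expectation (W e)"
    using abs_Yv_le_W integrable_Yv integrable_W by (intro integral_mono) auto
  also have "\<dots> \<le> (1 + \<eta>) * (2 powr (e / 2) + 1) * Pt d px t"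
    by (rule expectation_W_le)
  finally show ?thesis .
qed

lemma variance_Yv_ge:
  assumes C: "moment_error_const d \<eta> e \<le> C"
  shows "2 powr e * Gam d e * (1 - \<eta> * Nm d e / Gam d e) * Pt d px t - C * (Pt d px t)\<^sup>2
    \<le> expectation (\<lambda>y. (Yv N d e t x y - expectation (\<lambda>y. Yv N d e t x y))\<^sup>2)"
proof -
  define M1 where "M1 = (1 + \<eta>) * (2 powr (e / 2) + 1)"
  have "M1\<^sup>2 \<le> moment_error_const d \<eta> e"
    unfolding moment_error_const_def Let_def M1_def[symmetric]
    using eta_nonneg eta_less_1 Nm_pos[of d e] by (simp add: M1_def)
  then have M1_le_C: "M1\<^sup>2 \<le> C"
    using C by linarith
  have "(expectation (\<lambda>y. Yv N d e t x y))\<^sup>2 \<le> (M1 * Pt d px t)\<^sup>2"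
    unfolding M1_def using abs_expectation_Yv_le power_mono abs_ge_zero
    by (metis power2_abs)
  also have "\<dots> \<le> C * (Pt d px t)\<^sup>2"
    unfolding power_mult_distrib by (rule mult_right_mono[OF M1_le_C]) simp
  finally have mean_square: "(expectation (\<lambda>y. Yv N d e t x y))\<^sup>2 \<le> C * (Pt d px t)\<^sup>2" .
  have variance: "expectation (\<lambda>y. (Yv N d e t x y - expectation (\<lambda>y. Yv N d e t x y))\<^sup>2)
      = expectation (\<lambda>y. (Yv N d e t x y)\<^sup>2) - (expectation (\<lambda>y. Yv N d e t x y))\<^sup>2"
    by (rule variance_eq[OF integrable_Yv integrable_Yv_square])
  show ?thesis
  proof (cases "Gam d e = 0")
    case True
    have "0 \<le> C"
      using M1_le_C zero_le_power2[of M1] by linarith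
    then have "2 powr e * Gam d e * (1 - \<eta> * Nm d e / Gam d e) * Pt d px t - C * (Pt d px t)\<^sup>2 \<le> 0"
      using True by simp
    also have "0 \<le> expectation (\<lambda>y. (Yv N d e t x y - expectation (\<lambda>y. Yv N d e t x y))\<^sup>2)"
      by (intro integral_nonneg_AE) simp
    finally show ?thesis .
  next
    case False
    then have "2 powr e * Gam d e * (1 - \<eta> * Nm d e / Gam d e) * Pt d px t
        = 2 powr e * (Gam d e - \<eta> * Nm d e) * Pt d px t"
      by (simp add: field_simps)
    then show ?thesis
      using expectation_Yv_square_ge[of e] mean_square variance by linarith
  qed
qed

lemma third_moment_Yv_le:
  assumes C: "moment_error_const d \<eta> e \<le> C"
  shows "expectation (\<lambda>y. \<bar>Yv N d e t x y - expectation (\<lambda>y. Yv N d e t x y)\<bar> ^ 3)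
    \<le> (1 + \<eta>) * Del d e * 2 powr (real d / 2 + 3 * e / 2) * Pt d px t + C * (Pt d px t)\<^sup>2"
proof -
  define m where "m = expectation (\<lambda>y. Yv N d e t x y)"
  define P where "P = Pt d px t"
  define M1 where "M1 = (1 + \<eta>) * (2 powr (e / 2) + 1)"
  define M2 where "M2 = (1 + \<eta>) * 2 powr e * Nm d e"
  define B where "B = 2 powr (real d / 2) / (1 - \<eta>)"
  have P: "0 \<le> P" "P \<le> B"
    unfolding P_def B_def using Pt_pos Pt_le by auto
  have M: "0 \<le> M1" "0 \<le> M2"
    unfolding M1_def M2_def using eta_nonneg Nm_pos[of d e] by simp_all
  have m: "\<bar>m\<bar> \<le> M1 * P"
    unfolding m_def M1_def P_def by (rule abs_expectation_Yv_le)
  have EW: "expectation (W e) \<le> M1 * P" "expectation (\<lambda>y. (W e y)\<^sup>2) \<le> M2 * P"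
    unfolding M1_def M2_def P_def by (rule expectation_W_le, rule expectation_W_square_le)
  have "expectation (\<lambda>y. \<bar>Yv N d e t x y - m\<bar> ^ 3)
      \<le> expectation (\<lambda>y. (W e y) ^ 3) + 3 * \<bar>m\<bar> * expectation (\<lambda>y. (W e y)\<^sup>2)
        + 3 * m\<^sup>2 * expectation (W e) + \<bar>m\<bar> ^ 3"
    by (rule expectation_abs_sub_cube_le[OF borel_measurable_integrable[OF integrable_Yv]
          integrable_W integrable_W_square integrable_W_cube abs_Yv_le_W])
  also have "\<dots> \<le> (1 + \<eta>) * Del d e * 2 powr (real d / 2 + 3 * e / 2) * P
      + 3 * (M1 * P) * (M2 * P) + 3 * (M1 * P)\<^sup>2 * (M1 * P) + (M1 * P) ^ 3"
  proof (intro add_mono mult_mono mult_left_mono)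
    show "expectation (\<lambda>y. (W e y) ^ 3) \<le> (1 + \<eta>) * Del d e * 2 powr (real d / 2 + 3 * e / 2) * P"
      unfolding P_def by (rule expectation_W_cube_le)
    show "m\<^sup>2 \<le> (M1 * P)\<^sup>2" "\<bar>m\<bar> ^ 3 \<le> (M1 * P) ^ 3"
      using power_mono[OF m, of 2] power_mono[OF m, of 3] by simp_all
  qed (use m EW M P in \<open>auto intro!: integral_nonneg_AE add_nonneg_nonneg simp: less_imp_le[OF kern_pos]\<close>)
  also have "\<dots> = (1 + \<eta>) * Del d e * 2 powr (real d / 2 + 3 * e / 2) * P
      + (3 * M1 * M2 + 4 * M1 ^ 3 * P) * P\<^sup>2"
    by (simp add: power2_eq_square power3_eq_cube algebra_simps)
  also have "\<dots> \<le> (1 + \<eta>) * Del d e * 2 powr (real d / 2 + 3 * e / 2) * P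
      + (M1\<^sup>2 + 3 * M1 * M2 + 4 * M1 ^ 3 * B) * P\<^sup>2"
  proof (intro add_left_mono mult_right_mono)
    have "M1 ^ 3 * P \<le> M1 ^ 3 * B"
      using M P by (simp add: mult_left_mono)
    then show "3 * M1 * M2 + 4 * M1 ^ 3 * P \<le> M1\<^sup>2 + 3 * M1 * M2 + 4 * M1 ^ 3 * B"
      using zero_le_power2[of M1] by linarith
  qed simp
  also have "M1\<^sup>2 + 3 * M1 * M2 + 4 * M1 ^ 3 * B = moment_error_const d \<eta> e"
    unfolding moment_error_const_def Let_def M1_def M2_def B_def by simp
  finally have "expectation (\<lambda>y. \<bar>Yv N d e t x y - m\<bar> ^ 3)
      \<le> (1 + \<eta>) * Del d e * 2 powr (real d / 2 + 3 * e / 2) * P + moment_error_const d \<eta> e * P\<^sup>2" .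
  moreover have "moment_error_const d \<eta> e * P\<^sup>2 \<le> C * P\<^sup>2"
    using C by (simp add: mult_right_mono)
  ultimately show ?thesis
    unfolding m_def P_def by linarith
qed

end

lemma eta_bounds:
  fixes c G :: real
  assumes "0 < c" "c < 1" "1 < G"
  shows "0 \<le> c * (G - 1) / (1 + G)" "c * (G - 1) / (1 + G) < 1"
proof -
  have "c * (G - 1) < 1 * (G - 1)"
    using assms by (intro mult_strict_right_mono) auto
  then show "0 \<le> c * (G - 1) / (1 + G)" "c * (G - 1) / (1 + G) < 1"
    using assms by (simp_all add: field_simps)
qed

lemma mean_coefficients:
  fixes c G :: real
  assumes G: "0 < G"
  defines "\<eta> \<equiv> c * (G - 1) / (1 + G)"
  shows "G * (1 + \<eta>) - (1 - \<eta>) = (G - 1) * (1 + c)"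
    and "(1 + \<eta>) - (1 - \<eta>) / G = (1 - 1 / G) * (1 + c)"
proof -
  have "\<eta> * (1 + G) = c * (G - 1)"
    unfolding \<eta>_def using G by simp
  then show first: "G * (1 + \<eta>) - (1 - \<eta>) = (G - 1) * (1 + c)"
    by (simp add: algebra_simps)
  have "(1 + \<eta>) - (1 - \<eta>) / G = (G * (1 + \<eta>) - (1 - \<eta>)) / G"
    using G by (simp add: field_simps)
  also have "\<dots> = (1 - 1 / G) * (1 + c)"
    unfolding first using G by (simp add: field_simps)
  finally show "(1 + \<eta>) - (1 - \<eta>) / G = (1 - 1 / G) * (1 + c)" .
qed

theorem mainTheorem5:
  fixes d :: nat and \<epsilon> c :: real
  assumes d1: "d \<ge> 1" and eps: "\<epsilon> > 0"
    and Gp: "Gam d \<epsilon> > 0"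
    and c: "0 < c" "c < 1"
    and eta: "c * (2 powr (\<epsilon>/2) - 1) / (1 + 2 powr (\<epsilon>/2)) < Gam d \<epsilon> / Nm d \<epsilon>"
  shows "\<exists>C::real. \<forall>(N::nat) (\<mu>::(nat \<Rightarrow> real) measure) (x::nat \<Rightarrow> real) (px::real) (t::real).
     let \<eta> = c * (2 powr (\<epsilon>/2) - 1) / (1 + 2 powr (\<epsilon>/2));
         \<eta>s = (\<lambda>e. \<eta> * Nm d e / Gam d e);
         P = Pt d px t;
         EY = (\<lambda>e. integral\<^sup>L \<mu> (\<lambda>y. Yv N d e t x y))
     in
     (prob_space \<mu> \<and> sets \<mu> = sets borel \<and> px > 0 \<and> t > 0 \<and>
      (\<forall>th \<in> {t/3, 2*t/5, t/2, 2*t/3, t, 2*t}.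
          (1 - \<eta>) * px * pi powr (real d / 2) * th powr (real d / 2) \<le> integral\<^sup>L \<mu> (\<lambda>y. kern N th x y) \<and>
          integral\<^sup>L \<mu> (\<lambda>y. kern N th x y) \<le> (1 + \<eta>) * px * pi powr (real d / 2) * th powr (real d / 2)))
     \<longrightarrow>
     (EY \<epsilon> \<le> (2 powr (\<epsilon>/2) - 1) * (1 + c) * P \<and>
      integral\<^sup>L \<mu> (\<lambda>y. - Yv N d (-\<epsilon>) t x y) \<le> (1 - 2 powr (-\<epsilon>/2)) * (1 + c) * P \<and>
      (\<forall>e \<in> {\<epsilon>, -\<epsilon>}.
         integral\<^sup>L \<mu> (\<lambda>y. (Yv N d e t x y - EY e)^2)
           \<ge> 2 powr e * Gam d e * (1 - \<eta>s e) * P - C * P^2 \<and>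
         integral\<^sup>L \<mu> (\<lambda>y. \<bar>Yv N d e t x y - EY e\<bar>^3)
           \<le> (1 + \<eta>) * Del d e * 2 powr (real d / 2 + 3 * e / 2) * P + C * P^2))"
proof -
  define G where "G = 2 powr (\<epsilon> / 2)"
  define \<eta> where "\<eta> = c * (G - 1) / (1 + G)"
  have "1 < G"
    unfolding G_def using eps by simp
  then have \<eta>: "0 \<le> \<eta>" "\<eta> < 1"
    unfolding \<eta>_def using eta_bounds c by auto
  have inverse: "2 powr (- \<epsilon> / 2) = 1 / G"
    unfolding G_def by (simp only: minus_divide_left[symmetric] powr_minus_divide)
  have coefficients: "G * (1 + \<eta>) - (1 - \<eta>) = (G - 1) * (1 + c)"
    "(1 + \<eta>) - 2 powr (- \<epsilon> / 2) * (1 - \<eta>) = (1 - 2 powr (- \<epsilon> / 2)) * (1 + c)"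
    using mean_coefficients[of G c, folded \<eta>_def] \<open>1 < G\<close> unfolding inverse by simp_all
  define C where "C = moment_error_const d \<eta> \<epsilon> + moment_error_const d \<eta> (- \<epsilon>)"
  have C: "moment_error_const d \<eta> e \<le> C" if "e \<in> {\<epsilon>, - \<epsilon>}" for e
    using that moment_error_const_nonneg[OF \<eta>] unfolding C_def by auto
  show ?thesis
  proof (intro exI[of _ C] allI, unfold Let_def G_def[symmetric] \<eta>_def[symmetric],
      intro impI, elim conjE, goal_cases)
    case (1 N \<mu> x px t)
    then interpret gaussian_kernel_moments \<mu> N d x px t \<eta>
      using \<eta> by (intro gaussian_kernel_moments.intro gaussian_kernel_moments_axioms.intro) blast+
    show ?case
      using expectation_Yv_le[of \<epsilon>] expectation_neg_Yv_le[of "- \<epsilon>"] coefficients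
        variance_Yv_ge[OF C] third_moment_Yv_le[OF C]
      by (simp add: G_def mult.commute)
  qed
qed

end
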